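(* For all $k,n\in\mathbb{N}$ and every $a\in\mathcal{L}_n^k$, the function $f^a:\mathcal{L}_n^k\to\mathcal{L}_n^k$ is monotone, i.e. $u\le v$ implies $f^a(u)\le f^a(v)$.
   Context: $\mathcal{L}_n^k=\{0,1,\ldots,n-1\}^k$ with the componentwise order $u\le v$ iff $u_i\le v_i$ for all $i\in[k]$. For $a\in\mathcal{L}_n^k$, define $f^a$ coordinatewise: for $v\in\mathcal{L}_n^k$ and $i\in[k]$, $f^a_i(v)=v_i-1$ if $v_i>a_i$ and $v_j\le a_j$ for all $j<i$; $f^a_i(v)=v_i+1$ if $v_i<a_i$ and $v_j\ge a_j$ for all $j<i$; and $f^a_i(v)=v_i$ otherwise. Then $f^a(v)=(f^a_1(v),\ldots,f^a_k(v))$. *)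

theory Defs
  imports Main
begin

text \<open>Points of L_n^k are represented as functions nat => nat; coordinate i in [k]
  of the paper corresponds to index i-1 here (indices 0..k-1). Outside the index
  range the value is fixed to 0 so the representation is canonical.\<close>

definition lattice :: "nat \<Rightarrow> nat \<Rightarrow> (nat \<Rightarrow> nat) set" where
  "lattice n k = {v. (\<forall>i<k. v i < n) \<and> (\<forall>i\<ge>k. v i = 0)}"

definition le_vec :: "nat \<Rightarrow> (nat \<Rightarrow> nat) \<Rightarrow> (nat \<Rightarrow> nat) \<Rightarrow> bool" where
  "le_vec k u v \<longleftrightarrow> (\<forall>i<k. u i \<le> v i)"

definition fmap :: "nat \<Rightarrow> (nat \<Rightarrow> nat) \<Rightarrow> (nat \<Rightarrow> nat) \<Rightarrow> (nat \<Rightarrow> nat)" where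
  "fmap k a v = (\<lambda>i. if i < k then
      (if v i > a i \<and> (\<forall>j<i. v j \<le> a j) then v i - 1
       else if v i < a i \<and> (\<forall>j<i. v j \<ge> a j) then v i + 1
       else v i)
    else 0)"

end

theory Submission
  imports Defs
begin

text \<open>Coordinate \<open>i\<close> of \<open>f\<^sup>a\<close> moves down only when all earlier coordinates lie below
  those of \<open>a\<close>, a guard inherited by every smaller vector, and moves up only when they all
  lie above, a guard inherited by every larger vector. So if \<open>u \<le> v\<close> and \<open>u\<^sub>i = v\<^sub>i\<close>,
  whenever \<open>v\<^sub>i\<close> moves down so does \<open>u\<^sub>i\<close>, and whenever \<open>u\<^sub>i\<close> moves up so does \<open>v\<^sub>i\<close>; if
  \<open>u\<^sub>i < v\<^sub>i\<close>, unit steps could only swap the order if \<open>u\<^sub>i < a\<^sub>i < v\<^sub>i = u\<^sub>i + 1\<close>.\<close>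

lemma fmap_coordinate_mono:
  assumes "i < k" and le: "\<And>j. j \<le> i \<Longrightarrow> u j \<le> v j"
  shows "fmap k a u i \<le> fmap k a v i"
proof -
  have down_guard: "\<forall>j<i. u j \<le> a j" if "\<forall>j<i. v j \<le> a j"
    using that le by (meson le_trans less_imp_le)
  have up_guard: "\<forall>j<i. a j \<le> v j" if "\<forall>j<i. a j \<le> u j"
    using that le by (meson le_trans less_imp_le)
  show ?thesis
    using \<open>i < k\<close> le[of i] down_guard up_guard unfolding fmap_def by auto
qed

lemma fmap_mono: "le_vec k u v \<Longrightarrow> le_vec k (fmap k a u) (fmap k a v)"
  unfolding le_vec_def by (meson fmap_coordinate_mono le_less_trans)

theorem lemma4:
  fixes n k :: nat and a u v :: "nat \<Rightarrow> nat"
  assumes "a \<in> lattice n k" and "u \<in> lattice n k" and "v \<in> lattice n k"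
    and "le_vec k u v"
  shows "le_vec k (fmap k a u) (fmap k a v)"
  using \<open>le_vec k u v\<close> by (rule fmap_mono)

end
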